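(* Let $q\ge2$, $n\ge1$, $m=n+1$ and $R\in[m]$. Then $$\min_{{\boldsymbol y}\in\Sigma_{q,R}^m}\mathsf{H}^{\mathsf{In}}_{1\text{-}\mathsf{Ins}}({\boldsymbol y})=\log_2 m-\frac{(m-R+1)\log_2(m-R+1)}{m},$$ and the minimum is attained only by skewed channel outputs.
   Context: $\Sigma_q=\{0,\dots,q-1\}$. For sequences ${\boldsymbol x}$ of length $\ell$ and ${\boldsymbol y}$ of length $N\ge\ell$, $\omega_{{\boldsymbol x}}({\boldsymbol y})$ is the number of index tuples $1\le i_1<\dots<i_\ell\le N$ with $y_{i_j}=x_j$. The $1$-insertion channel with input length $n$ maps ${\boldsymbol x}\in\Sigma_q^n$ to ${\boldsymbol y}\in\Sigma_q^{n+1}$ with probability $\omega_{{\boldsymbol x}}({\boldsymbol y})/((n+1)q)$; under uniform transmission ($X$ uniform on $\Sigma_q^n$), $\mathsf{H}^{\mathsf{In}}_{1\text{-}\mathsf{Ins}}({\boldsymbol y})=H(X\mid Y={\boldsymbol y})$ in bits, with posterior $P({\boldsymbol x}\mid {\boldsymbol y})=\Pr\{{\boldsymbol y}\mid{\boldsymbol x}\}/\sum_{{\boldsymbol x}'}\Pr\{{\boldsymbol y}\mid{\boldsymbol x}'\}$. A run is a maximal block of identical consecutive symbols; $\Sigma_{q,R}^m$ is the set of sequences in $\Sigma_q^m$ with exactly $R$ runs. A sequence in $\Sigma_{q,R}^m$ is skewed if it has $R-1$ runs of length one and one run of length $m-(R-1)$. *)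

theory Defs
  imports Complex_Main
begin

definition seqs :: "nat \<Rightarrow> nat \<Rightarrow> nat list set" where
  "seqs q n = {xs. length xs = n \<and> set xs \<subseteq> {..<q}}"

text \<open>Embedding count: number of index sets I (i.e. increasing index tuples)
  of size length x such that the subsequence of y at I equals x.\<close>
definition omega :: "nat list \<Rightarrow> nat list \<Rightarrow> nat" where
  "omega x y = card {I. I \<subseteq> {..<length y} \<and> card I = length x \<and> nths y I = x}"

definition ins_prob :: "nat \<Rightarrow> nat \<Rightarrow> nat list \<Rightarrow> nat list \<Rightarrow> real" where
  "ins_prob q n x y = real (omega x y) / (real (n + 1) * real q)"

text \<open>Posterior under uniform input on Sigma_q^n.\<close>
definition posterior :: "nat \<Rightarrow> nat \<Rightarrow> nat list \<Rightarrow> nat list \<Rightarrow> real" where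
  "posterior q n y x = ins_prob q n x y / (\<Sum>x'\<in>seqs q n. ins_prob q n x' y)"

definition H_in_1ins :: "nat \<Rightarrow> nat \<Rightarrow> nat list \<Rightarrow> real" where
  "H_in_1ins q n y = - (\<Sum>x\<in>seqs q n.
      (let p = posterior q n y x in if p = 0 then 0 else p * log 2 p))"

fun run_lengths :: "'a list \<Rightarrow> nat list" where
  "run_lengths [] = []"
| "run_lengths (a # xs) =
     (let k = length (takeWhile (\<lambda>b. b = a) xs) in
        Suc k # run_lengths (drop k xs))"

definition num_runs :: "'a list \<Rightarrow> nat" where
  "num_runs xs = length (run_lengths xs)"

definition seqs_runs :: "nat \<Rightarrow> nat \<Rightarrow> nat \<Rightarrow> nat list set" where
  "seqs_runs q m R = {y \<in> seqs q m. num_runs y = R}"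

definition skewed :: "'a list \<Rightarrow> bool" where
  "skewed y = (let rl = run_lengths y; R = length rl in
     (\<exists>i<R. rl ! i = length y - (R - 1) \<and> (\<forall>j<R. j \<noteq> i \<longrightarrow> rl ! j = 1)))"

end

theory Submission
  imports Defs
begin

(*
  For an output y of length m = n + 1 the likelihood of an input x is proportional to the number of
  positions whose deletion turns y into x.  Deleting any symbol of a run gives the same sequence and
  different runs give different sequences, so the posterior is the distribution (r_1/m, ..., r_R/m)
  of the run lengths of y, and H(X | Y = y) = log m - (1/m) sum_i r_i log r_i.

  The function r log r vanishes at 1 and the slope r log r / (r - 1) of its chord from 1 increases
  strictly, hence a log a + b log b <= (a + b - 1) log (a + b - 1) for a, b >= 1, with equality only
  if a = 1 or b = 1.  Merging the runs one at a time gives sum_i r_i log r_i <= M log M for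
  M = m - R + 1, with equality exactly when one run has length M and all others have length 1.
*)

section \<open>Runs\<close>

lemma run_lengths_replicate_append:
  assumes "ys = [] \<or> hd ys \<noteq> a" "0 < K"
  shows "run_lengths (replicate K a @ ys) = K # run_lengths ys"
proof -
  obtain k where K: "K = Suc k"
    using assms(2) gr0_implies_Suc by blast
  have "takeWhile (\<lambda>b. b = a) ys = []"
    using assms(1) by (cases ys) auto
  then have "takeWhile (\<lambda>b. b = a) (replicate k a @ ys) = replicate k a"
    by (induction k) auto
  then show ?thesis
    unfolding K by (simp add: Let_def)
qed

lemma run_induct [case_names Nil run]:
  assumes "P []"
    and "\<And>a K ys. 0 < K \<Longrightarrow> ys = [] \<or> hd ys \<noteq> a \<Longrightarrow> P ys
                    \<Longrightarrow> P (replicate K a @ ys)"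
  shows "P y"
proof (induction y rule: run_lengths.induct)
  case 1
  show ?case by (rule assms(1))
next
  case (2 a xs)
  define k where "k = length (takeWhile (\<lambda>b. b = a) xs)"
  have "replicate k a = takeWhile (\<lambda>b. b = a) xs"
    unfolding k_def by (rule replicate_length_same) (auto dest: set_takeWhileD)
  then have decomp: "a # xs = replicate (Suc k) a @ drop k xs"
    unfolding k_def by (simp add: dropWhile_eq_drop[symmetric])
  have "drop k xs = [] \<or> hd (drop k xs) \<noteq> a"
    using hd_dropWhile[of "\<lambda>b. b = a" xs] unfolding k_def by (auto simp: dropWhile_eq_drop[symmetric])
  moreover have "P (drop k xs)"
    using "2.IH" k_def by simp
  ultimately have "P (replicate (Suc k) a @ drop k xs)"
    by (intro assms(2)) simp_all
  then show ?case
    by (simp only: decomp)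
qed

lemma sum_list_run_lengths: "sum_list (run_lengths y) = length y"
  by (induction y rule: run_induct) (simp_all add: run_lengths_replicate_append)

lemma run_lengths_pos: "r \<in> set (run_lengths y) \<Longrightarrow> 0 < r"
  by (induction y rule: run_induct) (auto simp: run_lengths_replicate_append)

section \<open>Single deletions\<close>

definition del_at :: "nat \<Rightarrow> 'a list \<Rightarrow> 'a list" where
  "del_at j y = take j y @ drop (Suc j) y"

definition deletions :: "'a list \<Rightarrow> 'a list set" where
  "deletions y = (\<lambda>j. del_at j y) ` {..<length y}"

definition del_count :: "'a list \<Rightarrow> 'a list \<Rightarrow> nat" where
  "del_count y x = card {j. j < length y \<and> del_at j y = x}"

lemma del_at_replicate_append_low:
  assumes "j < K"
  shows "del_at j (replicate K a @ ys) = replicate (K - 1) a @ ys"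
proof -
  have "replicate j a @ replicate (K - Suc j) a = replicate (K - 1) a"
    using assms by (simp add: replicate_add[symmetric])
  then show ?thesis
    using assms by (simp add: del_at_def)
qed

lemma del_at_replicate_append_high:
  "K \<le> j \<Longrightarrow> del_at j (replicate K a @ ys) = replicate K a @ del_at (j - K) ys"
  by (simp add: del_at_def Suc_diff_le)

lemma replicate_append_neq:
  assumes "ys = [] \<or> hd ys \<noteq> a" "0 < K"
  shows "replicate (K - 1) a @ ys \<noteq> replicate K a @ zs"
proof -
  have "replicate k a @ ys \<noteq> replicate (Suc k) a @ zs" for k
    using assms(1) by (induction k) auto
  moreover obtain k where "K = Suc k"
    using assms(2) gr0_implies_Suc by blast
  ultimately show ?thesis
    by simp
qed

lemma deletions_replicate_append:
  assumes "0 < K"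
  shows "deletions (replicate K a @ ys)
     = insert (replicate (K - 1) a @ ys) ((@) (replicate K a) ` deletions ys)"
proof (intro equalityI subsetI)
  fix x assume "x \<in> deletions (replicate K a @ ys)"
  then obtain j where j: "j < K + length ys" and x: "x = del_at j (replicate K a @ ys)"
    by (auto simp: deletions_def)
  show "x \<in> insert (replicate (K - 1) a @ ys) ((@) (replicate K a) ` deletions ys)"
  proof (cases "j < K")
    case True
    then show ?thesis
      using x by (simp add: del_at_replicate_append_low)
  next
    case False
    then have "x = replicate K a @ del_at (j - K) ys" "del_at (j - K) ys \<in> deletions ys"
      using x j by (auto simp: deletions_def del_at_replicate_append_high)
    then show ?thesis
      by blast
  qed
next
  fix x assume "x \<in> insert (replicate (K - 1) a @ ys) ((@) (replicate K a) ` deletions ys)"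
  then show "x \<in> deletions (replicate K a @ ys)"
  proof
    assume "x = replicate (K - 1) a @ ys"
    then have "x = del_at 0 (replicate K a @ ys)"
      using del_at_replicate_append_low[OF assms, of a ys] by simp
    then show ?thesis
      using assms by (auto simp: deletions_def)
  next
    assume "x \<in> (@) (replicate K a) ` deletions ys"
    then obtain i where i: "i < length ys" "x = replicate K a @ del_at i ys"
      by (auto simp: deletions_def)
    then have "x = del_at (i + K) (replicate K a @ ys)"
      by (simp add: del_at_replicate_append_high)
    moreover have "i + K \<in> {..<length (replicate K a @ ys)}"
      using i(1) by simp
    ultimately show ?thesis
      unfolding deletions_def by (rule image_eqI)
  qed
qed

lemma del_count_replicate_append_run:
  assumes "ys = [] \<or> hd ys \<noteq> a" "0 < K"
  shows "del_count (replicate K a @ ys) (replicate (K - 1) a @ ys) = K"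
proof -
  have "{j. j < length (replicate K a @ ys) \<and>
           del_at j (replicate K a @ ys) = replicate (K - 1) a @ ys} = {..<K}"
  proof (intro equalityI subsetI)
    fix j
    assume j: "j \<in> {j. j < length (replicate K a @ ys) \<and>
                      del_at j (replicate K a @ ys) = replicate (K - 1) a @ ys}"
    show "j \<in> {..<K}"
    proof (rule ccontr)
      assume "j \<notin> {..<K}"
      then show False
        using j replicate_append_neq[OF assms, of "del_at (j - K) ys"]
        by (simp add: del_at_replicate_append_high)
    qed
  qed (auto simp: del_at_replicate_append_low)
  then show ?thesis
    by (simp add: del_count_def)
qed

lemma del_count_replicate_append:
  assumes "ys = [] \<or> hd ys \<noteq> a" "0 < K"
  shows "del_count (replicate K a @ ys) (replicate K a @ zs) = del_count ys zs"
proof -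
  have "{j. j < length (replicate K a @ ys) \<and> del_at j (replicate K a @ ys) = replicate K a @ zs}
      = (\<lambda>i. i + K) ` {i. i < length ys \<and> del_at i ys = zs}"
  proof (intro equalityI subsetI)
    fix j
    assume j: "j \<in> {j. j < length (replicate K a @ ys) \<and>
                      del_at j (replicate K a @ ys) = replicate K a @ zs}"
    show "j \<in> (\<lambda>i. i + K) ` {i. i < length ys \<and> del_at i ys = zs}"
    proof (cases "j < K")
      case True
      then show ?thesis
        using j replicate_append_neq[OF assms, of zs] by (simp add: del_at_replicate_append_low)
    next
      case False
      then have "j = (j - K) + K" "j - K \<in> {i. i < length ys \<and> del_at i ys = zs}"
        using j by (auto simp: del_at_replicate_append_high)
      then show ?thesis
        by (rule image_eqI)
    qed
  next
    fix j
    assume "j \<in> (\<lambda>i. i + K) ` {i. i < length ys \<and> del_at i ys = zs}"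
    then show "j \<in> {j. j < length (replicate K a @ ys) \<and>
                      del_at j (replicate K a @ ys) = replicate K a @ zs}"
      by (auto simp: del_at_replicate_append_high)
  qed
  then show ?thesis
    unfolding del_count_def by (simp add: card_image inj_on_def)
qed

lemma sum_deletions_del_count:
  fixes g :: "nat \<Rightarrow> 'b::comm_monoid_add"
  shows "(\<Sum>x\<in>deletions y. g (del_count y x)) = sum_list (map g (run_lengths y))"
proof (induction y rule: run_induct)
  case Nil
  then show ?case by (simp add: deletions_def)
next
  case (run a K ys)
  let ?y = "replicate K a @ ys"
  have "finite ((@) (replicate K a) ` deletions ys)"
    by (simp add: deletions_def)
  moreover have "replicate (K - 1) a @ ys \<notin> (@) (replicate K a) ` deletions ys"
    using replicate_append_neq[OF run(2,1)] by blast
  ultimately have "(\<Sum>x\<in>deletions ?y. g (del_count ?y x))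
      = g (del_count ?y (replicate (K - 1) a @ ys))
        + (\<Sum>x\<in>(@) (replicate K a) ` deletions ys. g (del_count ?y x))"
    unfolding deletions_replicate_append[OF run(1)]
    by (rule sum.insert)
  also have "(\<Sum>x\<in>(@) (replicate K a) ` deletions ys. g (del_count ?y x))
      = (\<Sum>zs\<in>deletions ys. g (del_count ys zs))"
    by (simp add: sum.reindex inj_on_def del_count_replicate_append[OF run(2,1)])
  finally show ?case
    using run(3) del_count_replicate_append_run[OF run(2,1)] run_lengths_replicate_append[OF run(2,1)]
    by simp
qed

section \<open>The posterior of the insertion channel\<close>

lemma nths_remove_index:
  assumes "j < length y"
  shows "nths y ({..<length y} - {j}) = del_at j y"
proof -
  have y: "y = take j y @ y ! j # drop (Suc j) y"
    using assms by (simp add: id_take_nth_drop)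
  have "nths y ({..<length y} - {j})
      = take j y @ nths (drop (Suc j) y) {i. Suc i + j \<in> {..<length y} - {j}}"
    by (subst y) (use assms in \<open>simp add: nths_append nths_Cons nths_all min_def\<close>)
  also have "nths (drop (Suc j) y) {i. Suc i + j \<in> {..<length y} - {j}} = drop (Suc j) y"
    by (rule nths_all) auto
  finally show ?thesis
    by (simp add: del_at_def)
qed

lemma omega_eq_del_count:
  assumes "length y = Suc (length x)"
  shows "omega x y = del_count y x"
proof -
  let ?m = "length y"
  have subsets: "{I. I \<subseteq> {..<?m} \<and> card I = length x \<and> nths y I = x}
      = (\<lambda>j. {..<?m} - {j}) ` {j. j < ?m \<and> del_at j y = x}"
  proof (intro equalityI subsetI)
    fix I assume "I \<in> {I. I \<subseteq> {..<?m} \<and> card I = length x \<and> nths y I = x}"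
    then have I: "I \<subseteq> {..<?m}" "card I = length x" "nths y I = x"
      by auto
    have "card ({..<?m} - I) = 1"
      using I assms by (simp add: card_Diff_subset finite_subset)
    then obtain j where j: "{..<?m} - I = {j}"
      by (rule card_1_singletonE)
    then have jm: "j < ?m" and I_eq: "I = {..<?m} - {j}"
      using I(1) by auto
    then have "del_at j y = x"
      using nths_remove_index[OF jm] I(3) by simp
    then show "I \<in> (\<lambda>j. {..<?m} - {j}) ` {j. j < ?m \<and> del_at j y = x}"
      using jm I_eq by blast
  next
    fix I assume "I \<in> (\<lambda>j. {..<?m} - {j}) ` {j. j < ?m \<and> del_at j y = x}"
    then obtain j where j: "j < ?m" "del_at j y = x" "I = {..<?m} - {j}"
      by auto
    then have "nths y I = x"
      using nths_remove_index[OF j(1)] by simp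
    then show "I \<in> {I. I \<subseteq> {..<?m} \<and> card I = length x \<and> nths y I = x}"
      using assms j by simp
  qed
  have "inj_on (\<lambda>j. {..<?m} - {j}) {j. j < ?m \<and> del_at j y = x}"
    by (auto simp: inj_on_def)
  then show ?thesis
    unfolding omega_def del_count_def subsets by (rule card_image)
qed

lemma finite_seqs: "finite (seqs q n)"
  using finite_lists_length_eq[of "{..<q}" n] by (simp add: seqs_def conj_commute)

lemma deletions_subset_seqs: "y \<in> seqs q (Suc n) \<Longrightarrow> deletions y \<subseteq> seqs q n"
  using set_take_subset set_drop_subset by (fastforce simp: deletions_def seqs_def del_at_def)

lemma sum_seqs_del_count:
  fixes g :: "nat \<Rightarrow> 'b::comm_monoid_add"
  assumes "y \<in> seqs q (Suc n)" "g 0 = 0"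
  shows "(\<Sum>x\<in>seqs q n. g (del_count y x)) = sum_list (map g (run_lengths y))"
proof -
  have "del_count y x = 0" if "x \<notin> deletions y" for x
    using that unfolding del_count_def deletions_def by auto
  then have "(\<Sum>x\<in>seqs q n. g (del_count y x)) = (\<Sum>x\<in>deletions y. g (del_count y x))"
    using assms by (intro sum.mono_neutral_right finite_seqs deletions_subset_seqs) auto
  also have "\<dots> = sum_list (map g (run_lengths y))"
    by (rule sum_deletions_del_count)
  finally show ?thesis .
qed

lemma sum_seqs_del_count_eq:
  assumes "y \<in> seqs q (Suc n)"
  shows "(\<Sum>x\<in>seqs q n. real (del_count y x)) = Suc n"
  using sum_seqs_del_count[OF assms, of real] sum_list_run_lengths[of y] assms
  by (simp add: sum_list_of_nat seqs_def)

lemma posterior_eq_del_count: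
  assumes "y \<in> seqs q (Suc n)" "x \<in> seqs q n"
  shows "posterior q n y x = del_count y x / Suc n"
proof -
  have "0 < q"
    using assms(1) by (cases y) (auto simp: seqs_def)
  have ins_prob: "ins_prob q n x' y = del_count y x' / (real (Suc n) * real q)"
    if "x' \<in> seqs q n" for x'
    using that assms(1) by (simp add: ins_prob_def omega_eq_del_count seqs_def algebra_simps)
  have "(\<Sum>x'\<in>seqs q n. ins_prob q n x' y)
      = (\<Sum>x'\<in>seqs q n. real (del_count y x')) / (real (Suc n) * real q)"
    by (simp add: ins_prob sum_divide_distrib)
  also have "\<dots> = real (Suc n) / (real (Suc n) * real q)"
    using sum_seqs_del_count_eq[OF assms(1)] by simp
  finally show ?thesis
    using \<open>0 < q\<close> unfolding posterior_def ins_prob[OF assms(2)] by (simp del: of_nat_Suc)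
qed

definition nlogn :: "nat \<Rightarrow> real" where
  "nlogn r = real r * log 2 r"

lemma nlogn_Suc_0 [simp]: "nlogn (Suc 0) = 0"
  by (simp add: nlogn_def)

lemma H_in_1ins_eq:
  assumes "y \<in> seqs q (Suc n)"
  shows "H_in_1ins q n y = log 2 (Suc n) - sum_list (map nlogn (run_lengths y)) / Suc n"
proof -
  define m :: real where "m = Suc n"
  have "0 < m"
    by (simp add: m_def)
  have summand: "(let p = posterior q n y x in if p = 0 then 0 else p * log 2 p)
      = (nlogn (del_count y x) - del_count y x * log 2 m) / m" if "x \<in> seqs q n" for x
  proof -
    have "posterior q n y x = del_count y x / m"
      using posterior_eq_del_count[OF assms that] by (simp add: m_def)
    then show ?thesis
      using \<open>0 < m\<close>
      by (cases "del_count y x = 0") (simp_all add: nlogn_def log_divide diff_divide_distrib right_diff_distrib)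
  qed
  have "H_in_1ins q n y = - (\<Sum>x\<in>seqs q n. (nlogn (del_count y x) - del_count y x * log 2 m) / m)"
    unfolding H_in_1ins_def by (simp add: summand)
  also have "\<dots> = ((\<Sum>x\<in>seqs q n. real (del_count y x)) * log 2 m
                      - (\<Sum>x\<in>seqs q n. nlogn (del_count y x))) / m"
    by (simp add: sum_divide_distrib[symmetric] sum_subtractf sum_distrib_right diff_divide_distrib)
  also have "(\<Sum>x\<in>seqs q n. nlogn (del_count y x)) = sum_list (map nlogn (run_lengths y))"
    using assms by (rule sum_seqs_del_count) (simp add: nlogn_def)
  also have "(\<Sum>x\<in>seqs q n. real (del_count y x)) = m"
    using sum_seqs_del_count_eq[OF assms] unfolding m_def .
  finally show ?thesis
    using \<open>0 < m\<close> unfolding m_def by (simp add: field_simps)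
qed

section \<open>Convexity of n log n\<close>

definition chord_slope :: "real \<Rightarrow> real" where
  "chord_slope x = x * ln x / (x - 1)"

lemma chord_slope_less_succ:
  fixes x :: real
  assumes "1 < x"
  shows "chord_slope x < chord_slope (x + 1)"
proof -
  have "ln x < x - 1"
    using ln_add_one_self_less_self[of "x - 1"] assms by simp
  then have "x * x * ln x < (x * x - 1) * ln x + (x - 1)"
    by (simp add: algebra_simps)
  also have "\<dots> = (x * x - 1) * (ln x + 1 / (x + 1))"
    using assms by (simp add: field_simps)
  also have "\<dots> \<le> (x * x - 1) * ln (x + 1)"
  proof (rule mult_left_mono)
    show "ln x + 1 / (x + 1) \<le> ln (x + 1)"
      using ln_diff_le[of x "x + 1"] assms by (simp add: diff_divide_distrib)
    show "0 \<le> x * x - 1"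
      using assms mult_strict_mono[of 1 x 1 x] by simp
  qed
  \<comment> \<open>this is the claim multiplied by x (x - 1) > 0\<close>
  finally show ?thesis
    using assms unfolding chord_slope_def by (simp add: divide_less_eq field_simps)
qed

lemma chord_slope_strict_mono:
  fixes a b :: nat
  assumes "2 \<le> a" "a < b"
  shows "chord_slope a < chord_slope b"
proof -
  have step: "chord_slope (real k + 2) < chord_slope (real (Suc k) + 2)" for k
  proof -
    have "real (Suc k) + 2 = (real k + 2) + 1"
      by simp
    then show ?thesis
      using chord_slope_less_succ[of "real k + 2"] by simp
  qed
  have "chord_slope (real (a - 2) + 2) < chord_slope (real (b - 2) + 2)"
    using assms by (intro lift_Suc_mono_less[where f = "\<lambda>k. chord_slope (real k + 2)", OF step]) simp
  moreover have "real (a - 2) + 2 = real a" "real (b - 2) + 2 = real b"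
    using assms by (simp_all add: of_nat_diff)
  ultimately show ?thesis
    by simp
qed

(* Also for r = 0 and r = 1, where the junk value x / 0 = 0 appears on the right. *)
lemma nlogn_eq_chord_slope: "nlogn r = (real r - 1) * chord_slope r / ln 2"
  by (cases "r = 1") (simp_all add: nlogn_def chord_slope_def log_def)

lemma nlogn_add_le:
  assumes "0 < a" "0 < b"
  shows "nlogn a + nlogn b \<le> nlogn (a + b - 1)"
    and "nlogn a + nlogn b = nlogn (a + b - 1) \<Longrightarrow> a = 1 \<or> b = 1"
proof -
  have strict: "nlogn a + nlogn b < nlogn (a + b - 1)" if "2 \<le> a" "2 \<le> b"
  proof -
    let ?c = "a + b - 1"
    have "chord_slope a < chord_slope ?c" "chord_slope b < chord_slope ?c"
      using that by (intro chord_slope_strict_mono; simp)+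
    then have "(real a - 1) * chord_slope a + (real b - 1) * chord_slope b
        < (real a - 1) * chord_slope ?c + (real b - 1) * chord_slope ?c"
      using that by (intro add_strict_mono mult_strict_left_mono) auto
    also have "\<dots> = (real ?c - 1) * chord_slope ?c"
      using that by (simp add: of_nat_diff algebra_simps)
    finally have "(real a - 1) * chord_slope a + (real b - 1) * chord_slope b
        < (real ?c - 1) * chord_slope ?c" .
    then show ?thesis
      unfolding nlogn_eq_chord_slope by (simp add: add_divide_distrib[symmetric] divide_strict_right_mono)
  qed
  have trivial: "nlogn a + nlogn b = nlogn (a + b - 1)" if "a = 1 \<or> b = 1"
    using that by auto
  consider "a = 1 \<or> b = 1" | "2 \<le> a" "2 \<le> b"
    using assms by linarith
  then show "nlogn a + nlogn b \<le> nlogn (a + b - 1)"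
    by cases (use trivial strict in force)+
  show "a = 1 \<or> b = 1" if "nlogn a + nlogn b = nlogn (a + b - 1)"
  proof (rule ccontr)
    assume "\<not> (a = 1 \<or> b = 1)"
    then have "2 \<le> a" "2 \<le> b"
      using assms by linarith+
    then show False
      using strict that by linarith
  qed
qed

lemma length_le_sum_list: "\<forall>r\<in>set rs. 0 < r \<Longrightarrow> length rs \<le> sum_list (rs :: nat list)"
  by (induction rs) auto

lemma sum_list_eq_length_imp_all_one:
  fixes rs :: "nat list"
  assumes "\<forall>r\<in>set rs. 0 < r" "sum_list rs = length rs"
  shows "\<forall>r\<in>set rs. r = 1"
  using assms
proof (induction rs)
  case (Cons r rs)
  then show ?case
    using length_le_sum_list[of rs] by auto
qed simp

lemma sum_list_nlogn_le:
  assumes "\<forall>r\<in>set rs. 0 < r"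
  shows "sum_list (map nlogn rs) \<le> nlogn (sum_list rs - length rs + 1)"
  using assms
proof (induction rs)
  case Nil
  then show ?case by simp
next
  case (Cons r rs)
  let ?S = "sum_list rs - length rs + 1"
  have "sum_list (map nlogn (r # rs)) \<le> nlogn r + nlogn ?S"
    using Cons by simp
  also have "\<dots> \<le> nlogn (r + ?S - 1)"
    using Cons.prems by (intro nlogn_add_le) auto
  also have "r + ?S - 1 = sum_list (r # rs) - length (r # rs) + 1"
    using length_le_sum_list[of rs] Cons.prems by (simp; arith)
  finally show ?case .
qed

lemma sum_list_nlogn_eqD:
  assumes "\<forall>r\<in>set rs. 0 < r" "rs \<noteq> []"
    and "sum_list (map nlogn rs) = nlogn (sum_list rs - length rs + 1)"
  shows "\<exists>i<length rs. rs ! i = sum_list rs - length rs + 1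
                      \<and> (\<forall>j<length rs. j \<noteq> i \<longrightarrow> rs ! j = 1)"
  using assms
proof (induction rs)
  case (Cons r rs)
  show ?case
  proof (cases "rs = []")
    case True
    then show ?thesis
      using Cons.prems(1) by simp
  next
    case False
    let ?S = "sum_list rs - length rs + 1"
    have pos: "0 < r" "\<forall>r\<in>set rs. 0 < r"
      using Cons.prems(1) by auto
    have len: "length rs \<le> sum_list rs"
      using length_le_sum_list[OF pos(2)] .
    have "sum_list (r # rs) - length (r # rs) + 1 = r + ?S - 1"
      using len pos(1) by (simp; arith)
    then have "nlogn r + sum_list (map nlogn rs) = nlogn (r + ?S - 1)"
      using Cons.prems(3) by simp
    moreover have "sum_list (map nlogn rs) \<le> nlogn ?S"
      using sum_list_nlogn_le[OF pos(2)] .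
    moreover have "nlogn r + nlogn ?S \<le> nlogn (r + ?S - 1)"
      using pos(1) by (intro nlogn_add_le) auto
    ultimately have rs_eq: "sum_list (map nlogn rs) = nlogn ?S"
      and "nlogn r + nlogn ?S = nlogn (r + ?S - 1)"
      by linarith+
    then have "r = 1 \<or> ?S = 1"
      using pos(1) by (intro nlogn_add_le(2)) simp_all
    then consider "r = 1" | "?S = 1"
      by blast
    then show ?thesis
    proof cases
      case 1
      then obtain i where i: "i < length rs" "rs ! i = ?S"
        "\<forall>j<length rs. j \<noteq> i \<longrightarrow> rs ! j = 1"
        using Cons.IH[OF pos(2) False rs_eq] by blast
      have "sum_list (r # rs) - length (r # rs) + 1 = ?S"
        using 1 len by simp
      moreover have "(r # rs) ! j = 1" if "j < length (r # rs)" "j \<noteq> Suc i" for j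
        using that 1 i(3) by (cases j) auto
      ultimately show ?thesis
        using i(1,2) by (intro exI[of _ "Suc i"]) simp
    next
      case 2
      then have "\<forall>r\<in>set rs. r = 1"
        using sum_list_eq_length_imp_all_one[OF pos(2)] len by simp
      then have "(r # rs) ! j = 1" if "j < length (r # rs)" "j \<noteq> 0" for j
        using that by (cases j) auto
      moreover have "sum_list (r # rs) - length (r # rs) + 1 = r"
        using 2 len pos(1) by simp
      ultimately show ?thesis
        by (intro exI[of _ 0]) simp
    qed
  qed
qed simp

lemma sum_nlogn_run_lengths_le:
  "sum_list (map nlogn (run_lengths y)) \<le> nlogn (length y - num_runs y + 1)"
  using sum_list_nlogn_le[of "run_lengths y"] run_lengths_pos[of _ y] sum_list_run_lengths[of y]
  by (simp add: num_runs_def)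

lemma skewed_if_sum_nlogn_run_lengths_eq:
  assumes "y \<noteq> []" "sum_list (map nlogn (run_lengths y)) = nlogn (length y - num_runs y + 1)"
  shows "skewed y"
proof -
  let ?rl = "run_lengths y"
  have pos: "\<forall>r\<in>set ?rl. 0 < r"
    using run_lengths_pos by blast
  have "?rl \<noteq> []"
    using sum_list_run_lengths[of y] assms(1) by auto
  then have "0 < length ?rl"
    by simp
  then obtain i where "i < length ?rl" "?rl ! i = length y - length ?rl + 1"
    "\<forall>j<length ?rl. j \<noteq> i \<longrightarrow> ?rl ! j = 1"
    using sum_list_nlogn_eqD[OF pos] assms(2) sum_list_run_lengths[of y]
    by (auto simp: num_runs_def)
  moreover have "length y - length ?rl + 1 = length y - (length ?rl - 1)"
    using length_le_sum_list[OF pos] sum_list_run_lengths[of y] \<open>0 < length ?rl\<close> by arith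
  ultimately show ?thesis
    unfolding skewed_def Let_def by metis
qed

section \<open>Skewed sequences with a given number of runs\<close>

fun alternating :: "nat \<Rightarrow> nat \<Rightarrow> nat list" where
  "alternating b 0 = []"
| "alternating b (Suc k) = b # alternating (1 - b) k"

lemma length_alternating [simp]: "length (alternating b k) = k"
  by (induction k arbitrary: b) auto

lemma set_alternating: "b \<le> 1 \<Longrightarrow> set (alternating b k) \<subseteq> {0, 1}"
  by (induction k arbitrary: b) auto

lemma run_lengths_alternating: "b \<le> 1 \<Longrightarrow> run_lengths (alternating b k) = replicate k 1"
proof (induction k arbitrary: b)
  case (Suc k)
  have "1 - b \<noteq> b"
    using Suc.prems by arith
  then have "alternating (1 - b) k = [] \<or> hd (alternating (1 - b) k) \<noteq> b"
    by (cases k) auto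
  then have "run_lengths (replicate 1 b @ alternating (1 - b) k) = 1 # run_lengths (alternating (1 - b) k)"
    by (rule run_lengths_replicate_append) simp
  then show ?case
    using Suc.IH[of "1 - b"] by simp
qed simp

lemma exists_seqs_runs_skewed:
  assumes "2 \<le> q" "0 < R" "R \<le> m"
  shows "\<exists>y\<in>seqs_runs q m R. run_lengths y = (m - R + 1) # replicate (R - 1) 1"
proof
  let ?y = "replicate (m - R + 1) 0 @ alternating 1 (R - 1)"
  have "alternating 1 (R - 1) = [] \<or> hd (alternating 1 (R - 1)) \<noteq> 0"
    by (cases "R - 1") auto
  then have "run_lengths ?y = (m - R + 1) # run_lengths (alternating 1 (R - 1))"
    by (rule run_lengths_replicate_append) simp
  then show rl: "run_lengths ?y = (m - R + 1) # replicate (R - 1) 1"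
    by (simp add: run_lengths_alternating)
  have "set ?y \<subseteq> {..<q}"
    using set_alternating[of 1 "R - 1"] assms(1) by auto
  then show "?y \<in> seqs_runs q m R"
    using assms(2,3) rl by (simp add: seqs_runs_def seqs_def num_runs_def)
qed

theorem lemma10:
  fixes q n m R :: nat
  assumes "q \<ge> 2" "n \<ge> 1" "m = n + 1" "1 \<le> R" "R \<le> m"
  shows "(\<exists>y\<in>seqs_runs q m R.
            H_in_1ins q n y = log 2 m - real (m - R + 1) * log 2 (m - R + 1) / m)
       \<and> (\<forall>y\<in>seqs_runs q m R.
            H_in_1ins q n y \<ge> log 2 m - real (m - R + 1) * log 2 (m - R + 1) / m)
       \<and> (\<forall>y\<in>seqs_runs q m R.
            H_in_1ins q n y = log 2 m - real (m - R + 1) * log 2 (m - R + 1) / m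
            \<longrightarrow> skewed y)"
proof -
  have m: "m = Suc n" "0 < real m"
    using assms(3) by simp_all
  have bound: "real (m - R + 1) * log 2 (m - R + 1) = nlogn (m - R + 1)"
    using assms(5) by (simp add: nlogn_def of_nat_diff)
  have H: "H_in_1ins q n y = log 2 m - sum_list (map nlogn (run_lengths y)) / m"
    and len: "y \<noteq> []" "length y - num_runs y + 1 = m - R + 1"
    if "y \<in> seqs_runs q m R" for y
    using that H_in_1ins_eq[of y q n] m by (auto simp: seqs_runs_def seqs_def)
  have "\<exists>y\<in>seqs_runs q m R. sum_list (map nlogn (run_lengths y)) = nlogn (m - R + 1)"
    using exists_seqs_runs_skewed[OF assms(1) _ assms(5)] assms(4) by (force simp: sum_list_replicate)
  moreover have "sum_list (map nlogn (run_lengths y)) \<le> nlogn (m - R + 1)"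
    if "y \<in> seqs_runs q m R" for y
    using sum_nlogn_run_lengths_le[of y] len[OF that] by simp
  moreover have "skewed y"
    if "y \<in> seqs_runs q m R" "sum_list (map nlogn (run_lengths y)) = nlogn (m - R + 1)" for y
    using skewed_if_sum_nlogn_run_lengths_eq[of y] len[OF that(1)] that(2) by simp
  ultimately show ?thesis
    unfolding bound using H m(2) by (auto simp: divide_right_mono)
qed

end
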